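(* Fix $n\ge1$ and $r\in[n]$. For each permutation $\pi$ of $[n]$ define the polynomial in the $n^2$ variables $x=[x_{i,j}]$ $$P_\pi(x)=\prod_{i=1}^n x_{i,\pi(i)}\sum_{T\in\mathcal{T}_r(n)}\prod_{(u,v)\in T}x_{u,\pi(v)}.$$ Then for every $x\in\mathcal{B}_n$, $$\sum_{\pi\in S_n}(\pi-x)\,P_\pi(x)=0,$$ where each permutation $\pi$ is identified with its $n\times n$ permutation matrix (entry $(i,j)$ equal to $1$ if $j=\pi(i)$ and $0$ otherwise).
   Context: $S_n$ is the set of permutations of $[n]$. $\mathcal{B}_n$ is the set of $n\times n$ doubly stochastic matrices (nonnegative entries, rows and columns summing to $1$). An arborescence rooted at $r$ on vertex set $[n]$ is a set $T$ of directed edges $(u,v)$ (meaning $u\to v$) on $[n]$ such that from every vertex there is exactly one directed path to $r$; $\mathcal{T}_r(n)$ is the set of all such arborescences. *)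

theory Defs
  imports Complex_Main "HOL-Combinatorics.Permutations"
begin

text \<open>Matrices are functions nat => nat => real, indexed by [n] = {1..n}.\<close>

definition doubly_stochastic :: "nat \<Rightarrow> (nat \<Rightarrow> nat \<Rightarrow> real) \<Rightarrow> bool" where
  "doubly_stochastic n x \<longleftrightarrow>
     (\<forall>i\<in>{1..n}. \<forall>j\<in>{1..n}. x i j \<ge> 0) \<and>
     (\<forall>i\<in>{1..n}. (\<Sum>j\<in>{1..n}. x i j) = 1) \<and>
     (\<forall>j\<in>{1..n}. (\<Sum>i\<in>{1..n}. x i j) = 1)"

definition is_walk :: "(nat \<times> nat) set \<Rightarrow> nat \<Rightarrow> nat \<Rightarrow> nat list \<Rightarrow> bool" where
  "is_walk T v w ps \<longleftrightarrow> ps \<noteq> [] \<and> hd ps = v \<and> last ps = w \<and>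
     successively (\<lambda>a b. (a, b) \<in> T) ps"

definition arborescence :: "nat \<Rightarrow> nat \<Rightarrow> (nat \<times> nat) set \<Rightarrow> bool" where
  "arborescence n r T \<longleftrightarrow> T \<subseteq> {1..n} \<times> {1..n} \<and>
     (\<forall>v\<in>{1..n}. \<exists>!ps. is_walk T v r ps)"

definition perm_matrix :: "(nat \<Rightarrow> nat) \<Rightarrow> nat \<Rightarrow> nat \<Rightarrow> real" where
  "perm_matrix \<pi> i j = (if j = \<pi> i then 1 else 0)"

definition P_poly :: "nat \<Rightarrow> nat \<Rightarrow> (nat \<Rightarrow> nat) \<Rightarrow> (nat \<Rightarrow> nat \<Rightarrow> real) \<Rightarrow> real" where
  "P_poly n r \<pi> x = (\<Prod>i\<in>{1..n}. x i (\<pi> i)) *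
     (\<Sum>T\<in>{T. arborescence n r T}. \<Prod>(u, v)\<in>T. x u (\<pi> v))"

end

theory Submission
  imports Defs
begin

text \<open>For a matrix \<open>Q\<close> let \<open>A t\<close> be the sum, over the arborescences rooted at \<open>t\<close>, of
  the products of \<open>Q u v\<close> over their arcs \<open>(u, v)\<close>. Then \<open>P\<^sub>\<pi>(x) = (\<Prod>u. x u (\<pi> u)) * A r\<close>
  for \<open>Q u v = x u (\<pi> v)\<close>, which is again doubly stochastic. Redirecting the root of an
  arborescence, or closing it by an arc into a fixed vertex \<open>v\<close>, identifies both sides of the
  Markov chain tree identity \<open>\<Sum>s. A s * Q s v = A v * (\<Sum>w. Q v w)\<close> with a sum over the
  maps along which every vertex reaches \<open>v\<close>. So \<open>A\<close> is a stationary vector of \<open>Q\<close>, and a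
  maximum principle shows that it is constant. Rooting at \<open>i\<close> instead of \<open>r\<close> thus gives
  \<open>P\<^sub>\<pi>(x) = x i (\<pi> i) * R\<^sub>i(\<pi>)\<close>. Conjugating the arborescences by \<open>\<pi>\<close> turns \<open>R\<^sub>i(\<pi>)\<close>
  into a sum over arborescences rooted at \<open>\<pi> i\<close> whose terms only depend on the underlying
  undirected spanning tree; as a spanning tree can be rooted at any vertex, the sum \<open>S\<close> of
  \<open>R\<^sub>i(\<pi>)\<close> over the \<open>\<pi>\<close> with \<open>\<pi> i = c\<close> does not depend on \<open>c\<close>. Hence
  \<open>\<Sum>\<pi>. \<pi>\<^sub>i\<^sub>j * P\<^sub>\<pi>(x) = x i j * S\<close> and \<open>\<Sum>\<pi>. P\<^sub>\<pi>(x) = (\<Sum>c. x i c) * S = S\<close>.\<close>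

section \<open>Parent maps\<close>

definition reaches :: "('a \<Rightarrow> 'a) \<Rightarrow> 'a set \<Rightarrow> 'a \<Rightarrow> bool" where
  "reaches f V t \<longleftrightarrow> (\<forall>u\<in>V. \<exists>k. (f ^^ k) u = t)"

definition parent_maps :: "'a set \<Rightarrow> 'a \<Rightarrow> ('a \<Rightarrow> 'a) set" where
  "parent_maps V t = {p \<in> V \<rightarrow>\<^sub>E V. p t = t \<and> reaches p V t}"

lemma funpow_in_PiE: "f \<in> V \<rightarrow>\<^sub>E V \<Longrightarrow> u \<in> V \<Longrightarrow> (f ^^ k) u \<in> V"
  by (induction k) auto

lemma funpow_swap_apply: "(f ^^ m) ((f ^^ n) x) = (f ^^ n) ((f ^^ m) x)"
  by (metis add.commute comp_apply funpow_add)

lemma fun_upd_in_PiE_endo: "f \<in> V \<rightarrow>\<^sub>E V \<Longrightarrow> a \<in> V \<Longrightarrow> b \<in> V \<Longrightarrow> f(a := b) \<in> V \<rightarrow>\<^sub>E V"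
  using PiE_fun_upd[of b "\<lambda>_. V" a f V] by (simp add: insert_absorb)

lemma orbit_enters_if_agree_outside:
  assumes "(f ^^ k) u \<in> S" and "\<And>x. x \<notin> S \<Longrightarrow> g x = f x"
  shows "\<exists>k'. (g ^^ k') u \<in> S"
  using assms(1)
proof (induction k arbitrary: u)
  case 0
  then show ?case by (metis funpow_0)
next
  case (Suc k)
  show ?case
  proof (cases "u \<in> S")
    case True
    then show ?thesis by (metis funpow_0)
  next
    case False
    have "(f ^^ k) (f u) \<in> S"
      using Suc.prems by (simp add: funpow_Suc_right del: funpow.simps)
    then obtain k' where "(g ^^ k') (f u) \<in> S"
      using Suc.IH by blast
    then have "(g ^^ Suc k') u \<in> S"
      using assms(2)[OF False] by (simp add: funpow_Suc_right del: funpow.simps)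
    then show ?thesis by blast
  qed
qed

lemma funpow_crossing:
  assumes "\<not> P x" and "P ((f ^^ k) x)"
  shows "\<exists>i. \<not> P ((f ^^ i) x) \<and> P ((f ^^ Suc i) x)"
  using assms(2)
proof (induction k)
  case 0
  then show ?case using assms(1) by simp
next
  case (Suc k)
  then show ?case by (cases "P ((f ^^ k) x)") auto
qed

lemma reaches_fun_upd_target: "reaches f V t \<Longrightarrow> reaches (f(t := w)) V t"
  unfolding reaches_def using orbit_enters_if_agree_outside[where S="{t}" and g="f(t := w)"] by auto

lemma reaches_step: "reaches f V s \<Longrightarrow> f s = t \<Longrightarrow> reaches f V t"
  unfolding reaches_def by (metis comp_apply funpow.simps(2))

lemma reaches_trans:
  assumes "reaches f V v" and "(f ^^ k) v = s"
  shows "reaches f V s"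
  unfolding reaches_def
proof
  fix u
  assume "u \<in> V"
  then obtain j where "(f ^^ j) u = v"
    using assms(1) unfolding reaches_def by blast
  then have "(f ^^ (k + j)) u = s"
    using assms(2) by (simp add: funpow_add)
  then show "\<exists>k. (f ^^ k) u = s"
    by blast
qed

lemma reaches_reroot:
  assumes "reaches f V t" and "c \<noteq> t"
  shows "reaches (f(t := c, c := c)) V c"
  unfolding reaches_def
proof
  let ?g = "f(t := c, c := c)"
  fix u
  assume "u \<in> V"
  then obtain k where "(f ^^ k) u \<in> {c, t}"
    using assms(1) unfolding reaches_def by blast
  moreover have "?g x = f x" if "x \<notin> {c, t}" for x
    using that by simp
  ultimately have "\<exists>k'. (?g ^^ k') u \<in> {c, t}"
    by (rule orbit_enters_if_agree_outside)
  then obtain k' where "(?g ^^ k') u \<in> {c, t}" ..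
  then consider "(?g ^^ k') u = c" | "(?g ^^ k') u = t"
    by blast
  then show "\<exists>k. (?g ^^ k) u = c"
  proof cases
    case 2
    then have "(?g ^^ Suc k') u = c"
      using \<open>c \<noteq> t\<close> by simp
    then show ?thesis ..
  qed blast
qed

lemma parent_map_PiE: "p \<in> parent_maps V t \<Longrightarrow> p \<in> V \<rightarrow>\<^sub>E V"
  by (simp add: parent_maps_def)

lemma parent_map_root: "p \<in> parent_maps V t \<Longrightarrow> p t = t"
  by (simp add: parent_maps_def)

lemma parent_map_reaches: "p \<in> parent_maps V t \<Longrightarrow> u \<in> V \<Longrightarrow> \<exists>k. (p ^^ k) u = t"
  by (simp add: parent_maps_def reaches_def)

lemma finite_parent_maps: "finite V \<Longrightarrow> finite (parent_maps V t)"
  unfolding parent_maps_def by (rule finite_subset[of _ "V \<rightarrow>\<^sub>E V"]) (auto intro: finite_PiE)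

lemma parent_map_no_fixpoint:
  assumes p: "p \<in> parent_maps V t" and "u \<in> V" and "u \<noteq> t"
  shows "p u \<noteq> u"
proof
  assume "p u = u"
  then have "(p ^^ k) u = u" for k
    by (induction k) auto
  then show False
    using parent_map_reaches[OF p \<open>u \<in> V\<close>] \<open>u \<noteq> t\<close> by auto
qed

lemma parent_map_no_2cycle:
  assumes p: "p \<in> parent_maps V t" and "u \<in> V" and "u \<noteq> t"
  shows "p (p u) \<noteq> u"
proof
  assume cycle: "p (p u) = u"
  then have orbit: "(p ^^ k) u \<in> {u, p u}" for k
    by (induction k) auto
  obtain k where "(p ^^ k) u = t"
    using parent_map_reaches[OF p \<open>u \<in> V\<close>] by blast
  then have "t \<in> {u, p u}"
    using orbit[of k] by simp
  then have "p u = t"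
    using \<open>u \<noteq> t\<close> by auto
  then show False
    using cycle parent_map_root[OF p] \<open>u \<noteq> t\<close> by simp
qed

lemma parent_map_crossing:
  assumes p: "p \<in> parent_maps V r" and "w \<in> V" and "\<not> P w" and "P r"
  shows "\<exists>a\<in>V - {r}. \<not> P a \<and> P (p a)"
proof -
  obtain k where "(p ^^ k) w = r"
    using parent_map_reaches[OF p \<open>w \<in> V\<close>] by blast
  then obtain i where i: "\<not> P ((p ^^ i) w)" "P ((p ^^ Suc i) w)"
    using funpow_crossing[where P=P and x=w and f=p and k=k] assms(3,4) by auto
  moreover have "(p ^^ i) w \<in> V"
    using parent_map_PiE[OF p] \<open>w \<in> V\<close> by (rule funpow_in_PiE)
  moreover have "(p ^^ i) w \<noteq> r"
    using i(1) assms(4) by auto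
  ultimately show ?thesis
    by (intro bexI[of _ "(p ^^ i) w"]) auto
qed

section \<open>Arborescences as parent maps\<close>

definition arcs :: "'a set \<Rightarrow> 'a \<Rightarrow> ('a \<Rightarrow> 'a) \<Rightarrow> ('a \<times> 'a) set" where
  "arcs V t p = (\<lambda>u. (u, p u)) ` (V - {t})"

lemma is_walk_singleton: "is_walk T v w [a] \<longleftrightarrow> a = v \<and> v = w"
  by (auto simp: is_walk_def)

lemma is_walk_Cons_Cons:
  "is_walk T v w (a # b # ps) \<longleftrightarrow> a = v \<and> (v, b) \<in> T \<and> is_walk T b w (b # ps)"
  by (auto simp: is_walk_def)

lemma is_walk_unique:
  assumes "\<And>a b c. (a, b) \<in> T \<Longrightarrow> (a, c) \<in> T \<Longrightarrow> b = c" and "\<And>b. (t, b) \<notin> T"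
  shows "is_walk T v t ps \<Longrightarrow> is_walk T v t qs \<Longrightarrow> ps = qs"
proof (induction ps arbitrary: v qs)
  case Nil
  then show ?case by (simp add: is_walk_def)
next
  case (Cons a ps)
  obtain b qs' where qs: "qs = b # qs'"
    using Cons.prems(2) by (cases qs) (auto simp: is_walk_def)
  show ?case
  proof (cases ps; cases qs')
    fix c ps' d qs''
    assume ps: "ps = c # ps'" and qs': "qs' = d # qs''"
    then have "c = d"
      using Cons.prems assms(1) unfolding qs by (auto simp: is_walk_Cons_Cons)
    then show ?thesis
      using Cons ps qs' unfolding qs by (auto simp: is_walk_Cons_Cons)
  qed (use Cons.prems assms(2) qs in \<open>auto simp: is_walk_singleton is_walk_Cons_Cons\<close>)
qed

lemma is_walk_funpow:
  assumes "\<And>a b. (a, b) \<in> T \<Longrightarrow> p a = b"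
  shows "is_walk T v w ps \<Longrightarrow> (p ^^ (length ps - 1)) v = w"
proof (induction ps arbitrary: v)
  case Nil
  then show ?case by (simp add: is_walk_def)
next
  case (Cons a ps)
  then show ?case
    using assms
    by (cases ps) (auto simp: is_walk_singleton is_walk_Cons_Cons funpow_Suc_right simp del: funpow.simps)
qed

lemma is_walk_Cons_arc:
  "(u, a) \<in> T \<Longrightarrow> is_walk T a w ps \<Longrightarrow> is_walk T u w (u # ps)"
  by (cases ps) (auto simp: is_walk_def)

lemma is_walk_arcs_exists:
  assumes "p \<in> V \<rightarrow>\<^sub>E V" and "v \<in> V" and "(p ^^ k) v = t"
  shows "\<exists>ps. is_walk (arcs V t p) v t ps"
  using assms(2,3)
proof (induction k arbitrary: v)
  case 0
  then show ?case by (auto simp: is_walk_def)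
next
  case (Suc k)
  show ?case
  proof (cases "v = t")
    case True
    then show ?thesis by (auto simp: is_walk_def)
  next
    case False
    have "p v \<in> V" and "(p ^^ k) (p v) = t"
      using assms(1) Suc.prems by (auto simp: funpow_Suc_right simp del: funpow.simps)
    then obtain ps where ps: "is_walk (arcs V t p) (p v) t ps"
      using Suc.IH by blast
    have "(v, p v) \<in> arcs V t p"
      using False Suc.prems(1) by (auto simp: arcs_def)
    then have "is_walk (arcs V t p) v t (v # ps)"
      using ps by (rule is_walk_Cons_arc)
    then show ?thesis by blast
  qed
qed

lemma arborescence_arcs:
  assumes "p \<in> parent_maps {1..n} t"
  shows "arborescence n t (arcs {1..n} t p)"
  unfolding arborescence_def
proof (intro conjI ballI)
  show "arcs {1..n} t p \<subseteq> {1..n} \<times> {1..n}"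
    using parent_map_PiE[OF assms] by (auto simp: arcs_def)
next
  fix v :: nat
  assume "v \<in> {1..n}"
  then obtain k where "(p ^^ k) v = t"
    using parent_map_reaches[OF assms] by blast
  then obtain ps where "is_walk (arcs {1..n} t p) v t ps"
    using is_walk_arcs_exists[OF parent_map_PiE[OF assms] \<open>v \<in> {1..n}\<close>] by blast
  moreover have "is_walk (arcs {1..n} t p) v t qs \<Longrightarrow> qs = ps" for qs
    using calculation by (intro is_walk_unique[of _ t]) (auto simp: arcs_def)
  ultimately show "\<exists>!ps. is_walk (arcs {1..n} t p) v t ps" by blast
qed

lemma arborescence_arc_unique:
  assumes "arborescence n t T" and "(u, a) \<in> T" and "(u, b) \<in> T"
  shows "a = b"
proof -
  have V: "a \<in> {1..n}" "b \<in> {1..n}" "u \<in> {1..n}" and W: "\<And>v. v \<in> {1..n} \<Longrightarrow> \<exists>!ps. is_walk T v t ps"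
    using assms unfolding arborescence_def by auto
  obtain pa pb where pa: "is_walk T a t pa" and pb: "is_walk T b t pb"
    using W V by blast
  have "u # pa = u # pb"
    using W[OF V(3)] is_walk_Cons_arc[OF assms(2) pa] is_walk_Cons_arc[OF assms(3) pb] by blast
  then show ?thesis
    using pa pb by (auto simp: is_walk_def list.expand)
qed

lemma arborescence_root_no_arc:
  assumes "arborescence n t T" and "t \<in> {1..n}"
  shows "(t, a) \<notin> T"
proof
  assume ta: "(t, a) \<in> T"
  have W: "\<And>v. v \<in> {1..n} \<Longrightarrow> \<exists>!ps. is_walk T v t ps" and "a \<in> {1..n}"
    using assms ta unfolding arborescence_def by auto
  then obtain pa where pa: "is_walk T a t pa"
    by blast
  have "is_walk T t t [t]"
    by (simp add: is_walk_def)
  then have "t # pa = [t]"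
    using W[OF assms(2)] is_walk_Cons_arc[OF ta pa] by blast
  then show False
    using pa by (simp add: is_walk_def)
qed

lemma arborescence_arc_exists:
  assumes "arborescence n t T" and "u \<in> {1..n}" and "u \<noteq> t"
  shows "\<exists>a. (u, a) \<in> T"
proof -
  obtain ps where "is_walk T u t ps"
    using assms unfolding arborescence_def by blast
  then show ?thesis
    using assms(3) by (cases ps rule: remdups_adj.cases)
      (auto simp: is_walk_def[of _ _ _ "[]"] is_walk_singleton is_walk_Cons_Cons)
qed

lemma eq_arcs_if_functional:
  assumes "\<And>u a. (u, a) \<in> T \<Longrightarrow> u \<in> V - {t} \<and> p u = a"
    and "\<And>u. u \<in> V - {t} \<Longrightarrow> (u, p u) \<in> T"
  shows "T = arcs V t p"
proof
  show "T \<subseteq> arcs V t p"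
  proof (rule subrelI)
    fix u a
    assume "(u, a) \<in> T"
    then show "(u, a) \<in> arcs V t p"
      using assms(1) unfolding arcs_def by blast
  qed
  show "arcs V t p \<subseteq> T"
    using assms(2) unfolding arcs_def by blast
qed

lemma arborescence_eq_arcs:
  assumes T: "arborescence n t T" and t: "t \<in> {1..n}"
  shows "\<exists>p\<in>parent_maps {1..n} t. T = arcs {1..n} t p"
proof -
  let ?V = "{1..n}"
  define p where "p = (\<lambda>u\<in>?V. if u = t then t else THE a. (u, a) \<in> T)"
  have TV: "T \<subseteq> ?V \<times> ?V"
    using T by (simp add: arborescence_def)
  have p_arc: "u \<in> ?V - {t} \<and> p u = a" if "(u, a) \<in> T" for u a
  proof -
    have "u \<in> ?V" and "u \<noteq> t"
      using that TV arborescence_root_no_arc[OF T t] by auto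
    then show ?thesis
      using that arborescence_arc_unique[OF T] unfolding p_def by auto
  qed
  have arc_p: "(u, p u) \<in> T" if "u \<in> ?V - {t}" for u
    using arborescence_arc_exists[OF T] that p_arc by blast
  have "p u \<in> ?V" if "u \<in> ?V" for u
    using arc_p[of u] that TV t by (cases "u = t") (auto simp: p_def)
  then have "p \<in> ?V \<rightarrow>\<^sub>E ?V"
    by (auto simp: p_def)
  moreover have "reaches p ?V t"
    unfolding reaches_def
  proof
    fix u
    assume "u \<in> ?V"
    then obtain ps where "is_walk T u t ps"
      using T unfolding arborescence_def by blast
    then show "\<exists>k. (p ^^ k) u = t"
      using is_walk_funpow[of T p] p_arc by blast
  qed
  moreover have "p t = t"
    using t by (simp add: p_def)
  ultimately have "p \<in> parent_maps ?V t"
    by (simp add: parent_maps_def)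
  moreover have "T = arcs ?V t p"
    using p_arc arc_p by (rule eq_arcs_if_functional)
  ultimately show ?thesis
    by blast
qed

lemma inj_on_arcs: "inj_on (arcs V t) (parent_maps V t)"
proof (rule inj_onI)
  fix p q
  assume p: "p \<in> parent_maps V t" and q: "q \<in> parent_maps V t" and eq: "arcs V t p = arcs V t q"
  have "p u = q u" if "u \<in> V - {t}" for u
  proof -
    have "(u, p u) \<in> arcs V t q"
      using eq that unfolding arcs_def by blast
    then show ?thesis
      by (auto simp: arcs_def)
  qed
  moreover have "p u = q u" if "u \<notin> V - {t}" for u
    using that p q parent_map_root[OF p] parent_map_root[OF q]
      PiE_arb[OF parent_map_PiE[OF p]] PiE_arb[OF parent_map_PiE[OF q]] by (cases "u = t") auto
  ultimately show "p = q" by blast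
qed

lemma bij_betw_arcs_arborescences:
  assumes "t \<in> {1..n}"
  shows "bij_betw (arcs {1..n} t) (parent_maps {1..n} t) {T. arborescence n t T}"
  unfolding bij_betw_def
proof
  show "arcs {1..n} t ` parent_maps {1..n} t = {T. arborescence n t T}"
    using arborescence_arcs arborescence_eq_arcs[OF _ assms] by blast
qed (rule inj_on_arcs)

definition tree_sum :: "'a set \<Rightarrow> ('a \<Rightarrow> 'a \<Rightarrow> 'b::comm_semiring_1) \<Rightarrow> 'a \<Rightarrow> 'b" where
  "tree_sum V Q t = (\<Sum>p\<in>parent_maps V t. \<Prod>u\<in>V - {t}. Q u (p u))"

lemma sum_arborescences_eq_tree_sum:
  assumes "t \<in> {1..n}"
  shows "(\<Sum>T\<in>{T. arborescence n t T}. \<Prod>(u, v)\<in>T. Q u v) = tree_sum {1..n} Q t"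
proof -
  have "(\<Sum>T\<in>{T. arborescence n t T}. \<Prod>(u, v)\<in>T. Q u v)
      = (\<Sum>p\<in>parent_maps {1..n} t. \<Prod>(u, v)\<in>arcs {1..n} t p. Q u v)"
    by (rule sum.reindex_bij_betw[OF bij_betw_arcs_arborescences[OF assms], symmetric])
  also have "\<dots> = tree_sum {1..n} Q t"
    unfolding tree_sum_def arcs_def by (simp add: prod.reindex inj_on_def)
  finally show ?thesis .
qed

section \<open>The Markov chain tree identity and root independence\<close>

definition maps_reaching :: "'a set \<Rightarrow> 'a \<Rightarrow> ('a \<Rightarrow> 'a) set" where
  "maps_reaching V v = {g \<in> V \<rightarrow>\<^sub>E V. reaches g V v}"

lemma maps_reaching_cycle_predecessor:
  assumes "g \<in> maps_reaching V v" and "v \<in> V"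
  shows "\<exists>s\<in>V. g s = v \<and> (\<exists>k. (g ^^ k) v = s)"
proof -
  have gV: "g \<in> V \<rightarrow>\<^sub>E V" and "reaches g V v"
    using assms(1) by (auto simp: maps_reaching_def)
  then obtain k where "(g ^^ k) (g v) = v"
    using assms(2) unfolding reaches_def by blast
  then have "(g ^^ Suc k) v = v"
    by (simp only: funpow_Suc_right comp_apply)
  then have "g ((g ^^ k) v) = v"
    by simp
  moreover have "(g ^^ k) v \<in> V"
    using gV assms(2) by (rule funpow_in_PiE)
  ultimately show ?thesis
    by blast
qed

lemma cycle_predecessor_unique:
  assumes "g s = v" "(g ^^ a) v = s" "g s' = v" "(g ^^ b) v = s'"
  shows "s = s'"
proof -
  have "s = (g ^^ Suc a) ((g ^^ b) v)"
    using assms by (simp add: funpow_Suc_right del: funpow.simps)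
  also have "\<dots> = (g ^^ b) ((g ^^ Suc a) v)"
    by (rule funpow_swap_apply)
  also have "\<dots> = s'"
    using assms by simp
  finally show ?thesis .
qed

lemma parent_map_fun_upd_root:
  assumes "p \<in> parent_maps V s" and "s \<in> V" and "v \<in> V"
  shows "p(s := v) \<in> V \<rightarrow>\<^sub>E V" and "reaches (p(s := v)) V s"
  using assms by (simp_all add: parent_maps_def fun_upd_in_PiE_endo reaches_fun_upd_target)

lemma bij_betw_redirect_root:
  assumes "v \<in> V"
  shows "bij_betw (\<lambda>(w, p). p(v := w)) (V \<times> parent_maps V v) (maps_reaching V v)"
proof (rule bij_betw_byWitness[where f'="\<lambda>g. (g v, g(v := v))"])
  show "\<forall>a\<in>V \<times> parent_maps V v. (\<lambda>g. (g v, g(v := v))) ((\<lambda>(w, p). p(v := w)) a) = a"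
    by (auto simp: parent_map_root)
  show "(\<lambda>(w, p). p(v := w)) ` (V \<times> parent_maps V v) \<subseteq> maps_reaching V v"
    using parent_map_fun_upd_root[OF _ assms] by (auto simp: maps_reaching_def)
  show "(\<lambda>g. (g v, g(v := v))) ` maps_reaching V v \<subseteq> V \<times> parent_maps V v"
    using assms by (auto simp: maps_reaching_def parent_maps_def fun_upd_in_PiE_endo reaches_fun_upd_target)
qed auto

lemma
  assumes "p \<in> parent_maps V s" and "s \<in> V" and "v \<in> V"
  shows close_cycle_maps_reaching: "p(s := v) \<in> maps_reaching V v"
    and close_cycle_reaches_root: "\<exists>k. ((p(s := v)) ^^ k) v = s"
proof -
  have "p(s := v) \<in> V \<rightarrow>\<^sub>E V" and r: "reaches (p(s := v)) V s"
    using parent_map_fun_upd_root[OF assms] by simp_all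
  then show "p(s := v) \<in> maps_reaching V v"
    using reaches_step[OF r] by (simp add: maps_reaching_def)
  show "\<exists>k. ((p(s := v)) ^^ k) v = s"
    using r \<open>v \<in> V\<close> unfolding reaches_def by blast
qed

text \<open>A preimage of \<open>g\<close> is obtained by cutting the cycle of \<open>g\<close> through \<open>v\<close> just before \<open>v\<close>.\<close>

lemma bij_betw_close_cycle:
  assumes "v \<in> V"
  shows "bij_betw (\<lambda>(s, p). p(s := v)) (Sigma V (parent_maps V)) (maps_reaching V v)"
  unfolding bij_betw_def
proof
  show "inj_on (\<lambda>(s, p). p(s := v)) (Sigma V (parent_maps V))"
  proof (rule inj_onI, clarify)
    fix s p s' p'
    assume s: "s \<in> V" "p \<in> parent_maps V s" and s': "s' \<in> V" "p' \<in> parent_maps V s'"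
      and eq: "p(s := v) = p'(s' := v)"
    obtain a b where "((p(s := v)) ^^ a) v = s" and "((p(s := v)) ^^ b) v = s'"
      using close_cycle_reaches_root[OF s(2,1) assms] close_cycle_reaches_root[OF s'(2,1) assms]
      unfolding eq by blast
    moreover have "(p(s := v)) s = v"
      by simp
    moreover have "(p(s := v)) s' = v"
      unfolding eq by simp
    ultimately have "s = s'"
      using cycle_predecessor_unique by metis
    then show "s = s' \<and> p = p'"
      using eq parent_map_root[OF s(2)] parent_map_root[OF s'(2)] by (metis fun_upd_upd fun_upd_triv)
  qed
  show "(\<lambda>(s, p). p(s := v)) ` Sigma V (parent_maps V) = maps_reaching V v"
  proof
    show "(\<lambda>(s, p). p(s := v)) ` Sigma V (parent_maps V) \<subseteq> maps_reaching V v"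
      using close_cycle_maps_reaching[OF _ _ assms] by auto
    show "maps_reaching V v \<subseteq> (\<lambda>(s, p). p(s := v)) ` Sigma V (parent_maps V)"
    proof
      fix g
      assume g: "g \<in> maps_reaching V v"
      then obtain s k where s: "s \<in> V" "g s = v" and "(g ^^ k) v = s"
        using maps_reaching_cycle_predecessor[OF g assms] by blast
      moreover have "g \<in> V \<rightarrow>\<^sub>E V" and "reaches g V v"
        using g by (simp_all add: maps_reaching_def)
      ultimately have "g(s := s) \<in> parent_maps V s"
        using reaches_trans[of g V v k s]
        by (simp add: parent_maps_def fun_upd_in_PiE_endo reaches_fun_upd_target)
      moreover have "g = (g(s := s))(s := v)"
        using s(2) by auto
      ultimately show "g \<in> (\<lambda>(s, p). p(s := v)) ` Sigma V (parent_maps V)"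
        using s(1) by (auto intro!: image_eqI[of _ _ "(s, g(s := s))"])
    qed
  qed
qed

lemma prod_fun_upd_remove:
  assumes "finite V" and "v \<in> V"
  shows "(\<Prod>u\<in>V. Q u ((p(v := w)) u)) = Q v w * (\<Prod>u\<in>V - {v}. Q u (p u))"
proof -
  have "(\<Prod>u\<in>V - {v}. Q u ((p(v := w)) u)) = (\<Prod>u\<in>V - {v}. Q u (p u))"
    by (rule prod.cong) auto
  then show ?thesis
    using prod.remove[OF assms, of "\<lambda>u. Q u ((p(v := w)) u)"] by simp
qed

lemma tree_sum_times_row_sum:
  assumes "finite V" and "v \<in> V"
  shows "tree_sum V Q v * (\<Sum>w\<in>V. Q v w) = (\<Sum>g\<in>maps_reaching V v. \<Prod>u\<in>V. Q u (g u))"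
proof -
  have "tree_sum V Q v * (\<Sum>w\<in>V. Q v w)
      = (\<Sum>w\<in>V. \<Sum>p\<in>parent_maps V v. \<Prod>u\<in>V. Q u ((p(v := w)) u))"
    unfolding tree_sum_def sum_distrib_left sum_distrib_right prod_fun_upd_remove[OF assms]
    by (simp add: mult.commute)
  also have "\<dots> = (\<Sum>(w, p)\<in>V \<times> parent_maps V v. \<Prod>u\<in>V. Q u ((p(v := w)) u))"
    by (rule sum.cartesian_product)
  also have "\<dots> = (\<Sum>g\<in>maps_reaching V v. \<Prod>u\<in>V. Q u (g u))"
    by (subst sum.reindex_bij_betw[OF bij_betw_redirect_root[OF assms(2)], symmetric])
      (simp add: case_prod_unfold)
  finally show ?thesis .
qed

lemma sum_tree_sum_times_column:
  assumes "finite V" and "v \<in> V"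
  shows "(\<Sum>s\<in>V. tree_sum V Q s * Q s v) = (\<Sum>g\<in>maps_reaching V v. \<Prod>u\<in>V. Q u (g u))"
proof -
  have "(\<Sum>s\<in>V. tree_sum V Q s * Q s v)
      = (\<Sum>s\<in>V. \<Sum>p\<in>parent_maps V s. \<Prod>u\<in>V. Q u ((p(s := v)) u))"
    unfolding tree_sum_def sum_distrib_right
    by (intro sum.cong refl) (simp add: prod_fun_upd_remove[OF assms(1)] mult.commute del: fun_upd_apply)
  also have "\<dots> = (\<Sum>(s, p)\<in>Sigma V (parent_maps V). \<Prod>u\<in>V. Q u ((p(s := v)) u))"
    using assms(1) by (simp add: sum.Sigma finite_parent_maps)
  also have "\<dots> = (\<Sum>g\<in>maps_reaching V v. \<Prod>u\<in>V. Q u (g u))"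
    by (subst sum.reindex_bij_betw[OF bij_betw_close_cycle[OF assms(2)], symmetric])
      (simp add: case_prod_unfold)
  finally show ?thesis .
qed

lemma tree_sum_balance:
  assumes "finite V" and "v \<in> V"
  shows "(\<Sum>s\<in>V. tree_sum V Q s * Q s v) = tree_sum V Q v * (\<Sum>w\<in>V. Q v w)"
  using sum_tree_sum_times_column[OF assms, of Q] tree_sum_times_row_sum[OF assms, of Q] by simp

lemma tree_sum_nonneg:
  fixes Q :: "'a \<Rightarrow> 'a \<Rightarrow> 'b::linordered_semidom"
  assumes "\<And>u w. u \<in> V \<Longrightarrow> w \<in> V \<Longrightarrow> Q u w \<ge> 0"
  shows "tree_sum V Q t \<ge> 0"
  unfolding tree_sum_def
proof (intro sum_nonneg prod_nonneg)
  fix p u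
  assume p: "p \<in> parent_maps V t" and u: "u \<in> V - {t}"
  then have "u \<in> V" and "p u \<in> V"
    using parent_map_PiE[OF p] by auto
  then show "Q u (p u) \<ge> 0"
    by (rule assms)
qed

lemma tree_sum_eq_0_if_no_inflow:
  assumes "finite V" and "w \<in> V" and "\<not> P w" and "P r"
    and null: "\<And>a b. a \<in> V \<Longrightarrow> b \<in> V \<Longrightarrow> \<not> P a \<Longrightarrow> P b \<Longrightarrow> Q a b = 0"
  shows "tree_sum V Q r = 0"
  unfolding tree_sum_def
proof (rule sum.neutral, rule ballI)
  fix p
  assume p: "p \<in> parent_maps V r"
  obtain a where a: "a \<in> V - {r}" "\<not> P a" "P (p a)"
    using parent_map_crossing[OF p assms(2-4)] by blast
  moreover have "p a \<in> V"
    using a(1) parent_map_PiE[OF p] by auto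
  ultimately have "Q a (p a) = 0"
    using null by simp
  then show "(\<Prod>u\<in>V - {r}. Q u (p u)) = 0"
    using assms(1) a(1) prod_zero[of "V - {r}" "\<lambda>u. Q u (p u)"] by blast
qed

lemma max_stationary_no_inflow:
  fixes A :: "'a \<Rightarrow> 'b::linordered_field"
  assumes "finite V" and "\<And>u. u \<in> V \<Longrightarrow> Q u b \<ge> 0" and "(\<Sum>u\<in>V. Q u b) = 1"
    and "A b = (\<Sum>u\<in>V. A u * Q u b)" and "\<And>u. u \<in> V \<Longrightarrow> A u \<le> A b"
    and "a \<in> V" and "A a < A b"
  shows "Q a b = 0"
proof -
  have "(\<Sum>u\<in>V. (A b - A u) * Q u b) = A b * (\<Sum>u\<in>V. Q u b) - (\<Sum>u\<in>V. A u * Q u b)"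
    by (simp add: left_diff_distrib sum_subtractf sum_distrib_left)
  also have "\<dots> = 0"
    using assms(3,4) by simp
  finally have "(\<Sum>u\<in>V. (A b - A u) * Q u b) = 0" .
  moreover have "\<And>u. u \<in> V \<Longrightarrow> (A b - A u) * Q u b \<ge> 0"
    using assms(2,5) by simp
  ultimately have "\<forall>u\<in>V. (A b - A u) * Q u b = 0"
    using sum_nonneg_eq_0_iff[OF assms(1), of "\<lambda>u. (A b - A u) * Q u b"] by simp
  then have "(A b - A a) * Q a b = 0"
    using assms(6) by simp
  then show ?thesis
    using assms(7) by simp
qed

lemma tree_sum_root_independent:
  fixes Q :: "'a \<Rightarrow> 'a \<Rightarrow> 'b::linordered_field"
  assumes fin: "finite V" and nonneg: "\<And>u w. u \<in> V \<Longrightarrow> w \<in> V \<Longrightarrow> Q u w \<ge> 0"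
    and rows: "\<And>u. u \<in> V \<Longrightarrow> (\<Sum>w\<in>V. Q u w) = 1"
    and cols: "\<And>w. w \<in> V \<Longrightarrow> (\<Sum>u\<in>V. Q u w) = 1"
    and "s \<in> V" and "t \<in> V"
  shows "tree_sum V Q s = tree_sum V Q t"
proof -
  let ?A = "tree_sum V Q"
  define m where "m = Max (?A ` V)"
  have le: "?A u \<le> m" if "u \<in> V" for u
    unfolding m_def using fin that by (intro Max_ge) simp_all
  have "m \<in> ?A ` V"
    unfolding m_def using fin \<open>s \<in> V\<close> by (intro Max_in) auto
  then obtain r where r: "r \<in> V" "?A r = m"
    by (metis imageE)
  have stationary: "?A b = (\<Sum>u\<in>V. ?A u * Q u b)" if "b \<in> V" for b
    using tree_sum_balance[OF fin that, of Q] rows[OF that] by simp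
  have null: "Q a b = 0" if "a \<in> V" "b \<in> V" "?A a \<noteq> m" "?A b = m" for a b
  proof -
    have "?A a < ?A b"
      using le[OF that(1)] that(3,4) by simp
    then show ?thesis
      using that le stationary nonneg cols fin by (intro max_stationary_no_inflow[of V Q b ?A a]) simp_all
  qed
  show ?thesis
  proof (cases "\<forall>w\<in>V. ?A w = m")
    case True
    then show ?thesis
      using \<open>s \<in> V\<close> \<open>t \<in> V\<close> by simp
  next
    case False
    then obtain w where w: "w \<in> V" "?A w \<noteq> m"
      by blast
    have "?A r = 0"
      by (rule tree_sum_eq_0_if_no_inflow[where P="\<lambda>u. ?A u = m", OF fin w r(2) null])
    have "?A u = 0" if "u \<in> V" for u
    proof -
      have "0 \<le> ?A u"
        using nonneg by (rule tree_sum_nonneg)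
      then show ?thesis
        using le[OF that] r(2) \<open>?A r = 0\<close> by simp
    qed
    then show ?thesis
      using \<open>s \<in> V\<close> \<open>t \<in> V\<close> by simp
  qed
qed

section \<open>Rerooting spanning trees\<close>

definition undirected_edges :: "'a set \<Rightarrow> 'a \<Rightarrow> ('a \<Rightarrow> 'a) \<Rightarrow> 'a set set" where
  "undirected_edges V t p = (\<lambda>u. {u, p u}) ` (V - {t})"

lemma bij_betw_undirected_edge:
  assumes p: "p \<in> parent_maps V t"
  shows "bij_betw (\<lambda>u. {u, p u}) (V - {t}) (undirected_edges V t p)"
  unfolding bij_betw_def undirected_edges_def
proof
  show "inj_on (\<lambda>u. {u, p u}) (V - {t})"
  proof (rule inj_onI)
    fix u w
    assume "u \<in> V - {t}" and w: "w \<in> V - {t}" and "{u, p u} = {w, p w}"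
    then have "u = w \<or> (u = p w \<and> p u = w)"
      by (auto simp: doubleton_eq_iff)
    then show "u = w"
      using parent_map_no_2cycle[OF p] w by auto
  qed
qed simp

lemma reroot_step:
  assumes p: "p \<in> parent_maps V t" and "c \<in> V" and "p c = t" and "c \<noteq> t"
  shows "p(t := c, c := c) \<in> parent_maps V c"
    and "undirected_edges V c (p(t := c, c := c)) = undirected_edges V t p"
proof -
  let ?q = "p(t := c, c := c)"
  have "t \<in> V"
    using parent_map_PiE[OF p] \<open>c \<in> V\<close> \<open>p c = t\<close> by auto
  have "?q \<in> V \<rightarrow>\<^sub>E V"
    using parent_map_PiE[OF p] \<open>c \<in> V\<close> \<open>t \<in> V\<close> by (intro fun_upd_in_PiE_endo)
  moreover have "reaches ?q V c"
    using p \<open>c \<noteq> t\<close> by (simp add: parent_maps_def reaches_reroot)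
  ultimately show "?q \<in> parent_maps V c"
    by (simp add: parent_maps_def)
  have rest: "(\<lambda>u. {u, ?q u}) ` (V - {t, c}) = (\<lambda>u. {u, p u}) ` (V - {t, c})"
    by (rule image_cong) auto
  have "V - {c} = insert t (V - {t, c})"
    using \<open>t \<in> V\<close> \<open>c \<noteq> t\<close> by auto
  then have "undirected_edges V c ?q = insert {t, c} ((\<lambda>u. {u, p u}) ` (V - {t, c}))"
    unfolding undirected_edges_def using rest \<open>c \<noteq> t\<close> by simp
  moreover have "V - {t} = insert c (V - {t, c})"
    using \<open>c \<in> V\<close> \<open>c \<noteq> t\<close> by auto
  then have "undirected_edges V t p = insert {c, t} ((\<lambda>u. {u, p u}) ` (V - {t, c}))"
    unfolding undirected_edges_def using \<open>p c = t\<close> by simp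
  ultimately show "undirected_edges V c ?q = undirected_edges V t p"
    by (simp add: insert_commute)
qed

lemma undirected_edge_at_root:
  assumes "{a, t} \<in> undirected_edges V t p"
  shows "p a = t"
proof -
  obtain u where "u \<in> V - {t}" and "{a, t} = {u, p u}"
    using assms unfolding undirected_edges_def ..
  then show ?thesis
    by (auto simp: doubleton_eq_iff)
qed

lemma reroot:
  assumes p: "p \<in> parent_maps V t" and "t' \<in> V"
  shows "\<exists>q\<in>parent_maps V t'. undirected_edges V t' q = undirected_edges V t p"
proof -
  obtain k where "(p ^^ k) t' = t"
    using parent_map_reaches[OF p \<open>t' \<in> V\<close>] by blast
  then show ?thesis
    using \<open>t' \<in> V\<close>
  proof (induction k arbitrary: t')
    case 0
    then show ?case
      using p by auto
  next
    case (Suc k)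
    show ?case
    proof (cases "t' = t")
      case True
      then show ?thesis
        using p by blast
    next
      case False
      define c where "c = p t'"
      have "c \<in> V"
        using parent_map_PiE[OF p] Suc.prems(2) by (auto simp: c_def)
      have "(p ^^ k) c = t"
        using Suc.prems(1) by (simp add: c_def funpow_Suc_right del: funpow.simps)
      then obtain q where q: "q \<in> parent_maps V c"
        and edges: "undirected_edges V c q = undirected_edges V t p"
        using Suc.IH[OF _ \<open>c \<in> V\<close>] by blast
      have "c \<noteq> t'"
        using parent_map_no_fixpoint[OF p Suc.prems(2) False] by (simp add: c_def)
      have "{t', c} \<in> undirected_edges V t p"
        unfolding undirected_edges_def c_def using Suc.prems(2) False by (intro image_eqI[of _ _ t']) auto
      then have "{t', c} \<in> undirected_edges V c q"
        using edges by simp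
      then have "q t' = c"
        by (rule undirected_edge_at_root)
      let ?r = "q(c := t', t' := t')"
      have "?r \<in> parent_maps V t'" and "undirected_edges V t' ?r = undirected_edges V c q"
        using reroot_step[OF q Suc.prems(2) \<open>q t' = c\<close>] \<open>c \<noteq> t'\<close> by auto
      then show ?thesis
        using edges by auto
    qed
  qed
qed

lemma undirected_edges_eq_disagree_step:
  assumes q: "q \<in> parent_maps V t" and edges: "undirected_edges V t p = undirected_edges V t q"
    and d: "d \<in> V - {t}" and "p d \<noteq> q d"
  shows "q d \<in> V - {t}" and "p (q d) \<noteq> q (q d)"
proof -
  have "{d, q d} \<in> undirected_edges V t q"
    unfolding undirected_edges_def using d by (intro image_eqI[of _ _ d]) simp_all
  then have "{d, q d} \<in> undirected_edges V t p"
    using edges by simp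
  then have "{d, q d} \<in> (\<lambda>u. {u, p u}) ` (V - {t})"
    unfolding undirected_edges_def .
  then obtain e where e: "e \<in> V - {t}" "{d, q d} = {e, p e}" ..
  then have "q d = e" and "p e = d"
    using \<open>p d \<noteq> q d\<close> by (auto simp: doubleton_eq_iff)
  moreover have "q (q d) \<noteq> d"
    using parent_map_no_2cycle[OF q] d by blast
  ultimately show "q d \<in> V - {t}" and "p (q d) \<noteq> q (q d)"
    using e(1) by simp_all
qed

lemma undirected_edges_eq_imp_eq:
  assumes p: "p \<in> parent_maps V t" and q: "q \<in> parent_maps V t"
    and edges: "undirected_edges V t p = undirected_edges V t q"
  shows "p = q"
proof
  fix u
  show "p u = q u"
  proof (rule ccontr)
    assume "p u \<noteq> q u"
    then have "u \<in> V - {t}"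
      using parent_map_root[OF p] parent_map_root[OF q]
        PiE_arb[OF parent_map_PiE[OF p]] PiE_arb[OF parent_map_PiE[OF q]] by (cases "u \<in> V") auto
    have "(q ^^ k) u \<in> V - {t} \<and> p ((q ^^ k) u) \<noteq> q ((q ^^ k) u)" for k
    proof (induction k)
      case 0
      then show ?case
        using \<open>u \<in> V - {t}\<close> \<open>p u \<noteq> q u\<close> by simp
    next
      case (Suc k)
      then show ?case
        using undirected_edges_eq_disagree_step[OF q edges] by simp
    qed
    moreover obtain k where "(q ^^ k) u = t"
      using parent_map_reaches[OF q] \<open>u \<in> V - {t}\<close> by blast
    ultimately show False
      by (metis Diff_iff singletonI)
  qed
qed

lemma undirected_edges_image_eq:
  assumes "t \<in> V" and "t' \<in> V"
  shows "undirected_edges V t ` parent_maps V t = undirected_edges V t' ` parent_maps V t'"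
proof -
  have sub: "undirected_edges V s ` parent_maps V s \<subseteq> undirected_edges V s' ` parent_maps V s'"
    if s': "s' \<in> V" for s s'
  proof
    fix E
    assume "E \<in> undirected_edges V s ` parent_maps V s"
    then obtain p where p: "p \<in> parent_maps V s" and E: "E = undirected_edges V s p" ..
    obtain q where "q \<in> parent_maps V s'" and "undirected_edges V s' q = undirected_edges V s p"
      using reroot[OF p s'] ..
    then show "E \<in> undirected_edges V s' ` parent_maps V s'"
      unfolding E by (intro image_eqI[of _ _ q]) simp_all
  qed
  show ?thesis
    by (rule equalityI[OF sub[OF assms(2)] sub[OF assms(1)]])
qed

lemma sum_parent_maps_reroot:
  assumes "t \<in> V" and "t' \<in> V"
    and "\<And>p q. p \<in> parent_maps V t \<Longrightarrow> q \<in> parent_maps V t' \<Longrightarrow>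
           undirected_edges V t p = undirected_edges V t' q \<Longrightarrow> F p = G q"
  shows "(\<Sum>p\<in>parent_maps V t. F p) = (\<Sum>q\<in>parent_maps V t'. G q)"
proof -
  have bij: "bij_betw (undirected_edges V s) (parent_maps V s) (undirected_edges V t ` parent_maps V t)"
    if "s \<in> V" for s
    unfolding bij_betw_def
  proof
    show "inj_on (undirected_edges V s) (parent_maps V s)"
      by (rule inj_onI) (rule undirected_edges_eq_imp_eq)
    show "undirected_edges V s ` parent_maps V s = undirected_edges V t ` parent_maps V t"
      by (rule undirected_edges_image_eq[OF that assms(1)])
  qed
  define R where "R = inv_into (parent_maps V t') (undirected_edges V t') \<circ> undirected_edges V t"
  have R: "bij_betw R (parent_maps V t) (parent_maps V t')"
    unfolding R_def using bij[OF assms(1)] bij_betw_inv_into[OF bij[OF assms(2)]] by (rule bij_betw_trans)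
  have R_edges: "undirected_edges V t' (R p) = undirected_edges V t p" if "p \<in> parent_maps V t" for p
  proof -
    have "undirected_edges V t p \<in> undirected_edges V t' ` parent_maps V t'"
      using imageI[OF that, of "undirected_edges V t"] undirected_edges_image_eq[OF assms(1,2)] by simp
    then show ?thesis
      unfolding R_def comp_def by (rule f_inv_into_f)
  qed
  have "(\<Sum>p\<in>parent_maps V t. F p) = (\<Sum>p\<in>parent_maps V t. G (R p))"
  proof (rule sum.cong[OF refl])
    fix p
    assume p: "p \<in> parent_maps V t"
    show "F p = G (R p)"
      using assms(3)[OF p bij_betw_apply[OF R p]] R_edges[OF p] by simp
  qed
  also have "\<dots> = (\<Sum>q\<in>parent_maps V t'. G q)"
    using sum.reindex_bij_betw[OF R] .
  finally show ?thesis .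
qed

section \<open>Conjugating and relabelling by permutations\<close>

definition conj_map :: "'a set \<Rightarrow> ('a \<Rightarrow> 'a) \<Rightarrow> ('a \<Rightarrow> 'a) \<Rightarrow> 'a \<Rightarrow> 'a" where
  "conj_map V \<sigma> p = restrict (\<sigma> \<circ> p \<circ> inv \<sigma>) V"

lemma conj_map_apply: "\<sigma> permutes V \<Longrightarrow> u \<in> V \<Longrightarrow> conj_map V \<sigma> p (\<sigma> u) = \<sigma> (p u)"
  unfolding conj_map_def by (simp add: permutes_in_image permutes_inverses)

lemma conj_map_parent_map:
  assumes \<sigma>: "\<sigma> permutes V" and p: "p \<in> parent_maps V r" and "r \<in> V"
  shows "conj_map V \<sigma> p \<in> parent_maps V (\<sigma> r)"
proof -
  let ?q = "conj_map V \<sigma> p"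
  have pV: "p \<in> V \<rightarrow>\<^sub>E V"
    using p by (rule parent_map_PiE)
  have inv_in: "inv \<sigma> u \<in> V" if "u \<in> V" for u
    using that permutes_inv[OF \<sigma>] by (simp add: permutes_in_image)
  have "\<sigma> (p (inv \<sigma> u)) \<in> V" if "u \<in> V" for u
    using PiE_mem[OF pV inv_in[OF that]] \<sigma> by (simp add: permutes_in_image)
  then have "?q \<in> V \<rightarrow>\<^sub>E V"
    unfolding conj_map_def restrict_PiE_iff by simp
  moreover have "?q (\<sigma> r) = \<sigma> r"
    using conj_map_apply[OF \<sigma> \<open>r \<in> V\<close>] parent_map_root[OF p] by simp
  moreover have "reaches ?q V (\<sigma> r)"
    unfolding reaches_def
  proof
    fix u
    assume "u \<in> V"
    have orbit: "(?q ^^ k) u = \<sigma> ((p ^^ k) (inv \<sigma> u))" for k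
    proof (induction k)
      case 0
      then show ?case
        by (simp add: permutes_inverses[OF \<sigma>])
    next
      case (Suc k)
      have "(p ^^ k) (inv \<sigma> u) \<in> V"
        using pV inv_in[OF \<open>u \<in> V\<close>] by (rule funpow_in_PiE)
      then show ?case
        using Suc conj_map_apply[OF \<sigma>] by simp
    qed
    obtain k where "(p ^^ k) (inv \<sigma> u) = r"
      using parent_map_reaches[OF p inv_in[OF \<open>u \<in> V\<close>]] by blast
    then have "(?q ^^ k) u = \<sigma> r"
      by (simp add: orbit)
    then show "\<exists>k. (?q ^^ k) u = \<sigma> r" ..
  qed
  ultimately show ?thesis
    by (simp add: parent_maps_def)
qed

lemma conj_map_inv:
  assumes \<sigma>: "\<sigma> permutes V" and "p \<in> V \<rightarrow>\<^sub>E V"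
  shows "conj_map V (inv \<sigma>) (conj_map V \<sigma> p) = p"
proof
  fix u
  show "conj_map V (inv \<sigma>) (conj_map V \<sigma> p) u = p u"
  proof (cases "u \<in> V")
    case True
    then have "conj_map V \<sigma> p (\<sigma> u) = \<sigma> (p u)"
      by (rule conj_map_apply[OF \<sigma>])
    then show ?thesis
      using True \<sigma> by (simp add: conj_map_def permutes_inv_inv permutes_inverses permutes_in_image)
  next
    case False
    then show ?thesis
      using PiE_arb[OF assms(2)] by (simp add: conj_map_def)
  qed
qed

lemma bij_betw_conj_map:
  assumes \<sigma>: "\<sigma> permutes V" and "r \<in> V"
  shows "bij_betw (conj_map V \<sigma>) (parent_maps V r) (parent_maps V (\<sigma> r))"
proof (rule bij_betw_byWitness[where f'="conj_map V (inv \<sigma>)"])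
  have inv_\<sigma>: "inv \<sigma> permutes V" and "\<sigma> r \<in> V" and "inv \<sigma> (\<sigma> r) = r"
    using \<sigma> \<open>r \<in> V\<close> by (simp_all add: permutes_inv permutes_in_image permutes_inverses)
  show "\<forall>p\<in>parent_maps V r. conj_map V (inv \<sigma>) (conj_map V \<sigma> p) = p"
    by (simp add: conj_map_inv[OF \<sigma>] parent_map_PiE)
  show "\<forall>q\<in>parent_maps V (\<sigma> r). conj_map V \<sigma> (conj_map V (inv \<sigma>) q) = q"
    by (simp add: conj_map_inv[OF inv_\<sigma>, unfolded permutes_inv_inv[OF \<sigma>]] parent_map_PiE)
  show "conj_map V \<sigma> ` parent_maps V r \<subseteq> parent_maps V (\<sigma> r)"
    by (intro image_subsetI conj_map_parent_map[OF \<sigma> _ \<open>r \<in> V\<close>])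
  show "conj_map V (inv \<sigma>) ` parent_maps V (\<sigma> r) \<subseteq> parent_maps V r"
  proof (rule image_subsetI)
    fix q
    assume "q \<in> parent_maps V (\<sigma> r)"
    from conj_map_parent_map[OF inv_\<sigma> this \<open>\<sigma> r \<in> V\<close>]
    show "conj_map V (inv \<sigma>) q \<in> parent_maps V r"
      unfolding \<open>inv \<sigma> (\<sigma> r) = r\<close> .
  qed
qed

lemma permutes_extend_bij_betw:
  assumes "bij_betw f (V - {a}) (V - {b})" and "a \<in> V" and "b \<in> V"
  shows "(\<lambda>x. if x = a then b else if x \<in> V then f x else x) permutes V"
proof (rule bij_imp_permutes)
  let ?\<sigma> = "\<lambda>x. if x = a then b else if x \<in> V then f x else x"
  have "bij_betw ?\<sigma> ({a} \<union> (V - {a})) ({b} \<union> (V - {b}))"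
  proof (rule bij_betw_combine)
    show "bij_betw ?\<sigma> {a} {b}"
      by (simp add: bij_betw_def)
    have "bij_betw ?\<sigma> (V - {a}) (V - {b}) = bij_betw f (V - {a}) (V - {b})"
      by (rule bij_betw_cong) simp
    then show "bij_betw ?\<sigma> (V - {a}) (V - {b})"
      using assms(1) by simp
  qed blast
  then show "bij_betw ?\<sigma> V V"
    using assms(2,3) by (simp add: insert_absorb)
  show "?\<sigma> x = x" if "x \<notin> V" for x
    using that assms(2) by auto
qed

lemma relabelling_permutation:
  assumes e: "bij_betw e (V - {c}) E" and e': "bij_betw e' (V - {c'}) E" and "c \<in> V" and "c' \<in> V"
  shows "\<exists>\<sigma>. \<sigma> permutes V \<and> \<sigma> c = c' \<and> (\<forall>a\<in>V - {c}. e' (\<sigma> a) = e a)"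
proof -
  define f where "f = inv_into (V - {c'}) e' \<circ> e"
  have f: "bij_betw f (V - {c}) (V - {c'})"
    unfolding f_def using e bij_betw_inv_into[OF e'] by (rule bij_betw_trans)
  let ?\<sigma> = "\<lambda>x. if x = c then c' else if x \<in> V then f x else x"
  have "e' (?\<sigma> a) = e a" if "a \<in> V - {c}" for a
  proof -
    have "e a \<in> e' ` (V - {c'})"
      using bij_betw_apply[OF e that] bij_betw_imp_surj_on[OF e'] by simp
    then show ?thesis
      using that by (simp add: f_def f_inv_into_f)
  qed
  moreover have "?\<sigma> permutes V"
    by (rule permutes_extend_bij_betw[OF f \<open>c \<in> V\<close> \<open>c' \<in> V\<close>])
  ultimately show ?thesis
    by (intro exI[of _ ?\<sigma>]) auto
qed

lemma permutes_apply_neq: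
  assumes "\<pi> permutes V" and "u \<in> V - {i}"
  shows "\<pi> u \<in> V - {\<pi> i}"
  using assms by (auto simp: permutes_in_image permutes_inj[THEN inj_eq])

lemma sum_permutes_relabel:
  assumes \<sigma>: "\<sigma> permutes V" and "\<sigma> c = c'" and relabel: "\<And>a. a \<in> V - {c} \<Longrightarrow> e' (\<sigma> a) = e a"
  shows "(\<Sum>\<pi> | \<pi> permutes V \<and> \<pi> i = c. \<Prod>u\<in>V - {i}. W u (e (\<pi> u)))
       = (\<Sum>\<pi> | \<pi> permutes V \<and> \<pi> i = c'. \<Prod>u\<in>V - {i}. W u (e' (\<pi> u)))"
proof (rule sum.reindex_bij_witness[where i="\<lambda>\<pi>. inv \<sigma> \<circ> \<pi>" and j="\<lambda>\<pi>. \<sigma> \<circ> \<pi>"])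
  fix \<pi>
  assume "\<pi> \<in> {\<pi>. \<pi> permutes V \<and> \<pi> i = c}"
  then have \<pi>: "\<pi> permutes V" "\<pi> i = c"
    by simp_all
  show "inv \<sigma> \<circ> (\<sigma> \<circ> \<pi>) = \<pi>"
    by (simp add: o_assoc permutes_inv_o[OF \<sigma>])
  show "\<sigma> \<circ> \<pi> \<in> {\<pi>. \<pi> permutes V \<and> \<pi> i = c'}"
    using permutes_compose[OF \<pi>(1) \<sigma>] \<pi>(2) \<open>\<sigma> c = c'\<close> by simp
  show "(\<Prod>u\<in>V - {i}. W u (e' ((\<sigma> \<circ> \<pi>) u))) = (\<Prod>u\<in>V - {i}. W u (e (\<pi> u)))"
  proof (rule prod.cong[OF refl])
    fix u
    assume "u \<in> V - {i}"
    have "\<pi> u \<in> V - {c}"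
      using permutes_apply_neq[OF \<pi>(1) \<open>u \<in> V - {i}\<close>] \<pi>(2) by simp
    then show "W u (e' ((\<sigma> \<circ> \<pi>) u)) = W u (e (\<pi> u))"
      by (simp add: relabel)
  qed
next
  have inv_\<sigma>: "inv \<sigma> permutes V" and "inv \<sigma> c' = c"
    using \<sigma> \<open>\<sigma> c = c'\<close> by (simp_all add: permutes_inv permutes_inv_eq)
  fix \<pi>
  assume "\<pi> \<in> {\<pi>. \<pi> permutes V \<and> \<pi> i = c'}"
  then have \<pi>: "\<pi> permutes V" "\<pi> i = c'"
    by simp_all
  show "\<sigma> \<circ> (inv \<sigma> \<circ> \<pi>) = \<pi>"
    by (simp add: o_assoc permutes_inv_o[OF \<sigma>])
  show "inv \<sigma> \<circ> \<pi> \<in> {\<pi>. \<pi> permutes V \<and> \<pi> i = c}"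
    using permutes_compose[OF \<pi>(1) inv_\<sigma>] \<pi>(2) \<open>inv \<sigma> c' = c\<close> by simp
qed

section \<open>Rooting the polynomials at an arbitrary vertex\<close>

text \<open>Once the root is moved to \<open>i\<close>, this is \<open>P\<^sub>\<pi>(x)\<close> with the factor \<open>x i (\<pi> i)\<close>
  removed.\<close>

definition P_rooted :: "'a set \<Rightarrow> ('a \<Rightarrow> 'a \<Rightarrow> 'b::comm_semiring_1) \<Rightarrow> 'a \<Rightarrow> ('a \<Rightarrow> 'a) \<Rightarrow> 'b" where
  "P_rooted V x i \<pi> = (\<Sum>p\<in>parent_maps V i. \<Prod>u\<in>V - {i}. x u (\<pi> u) * x u (\<pi> (p u)))"

lemma P_rooted_edge_form:
  assumes \<pi>: "\<pi> permutes V" and "i \<in> V"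
  shows "P_rooted V x i \<pi> = (\<Sum>\<phi>\<in>parent_maps V (\<pi> i). \<Prod>u\<in>V - {i}. \<Prod>a\<in>{\<pi> u, \<phi> (\<pi> u)}. x u a)"
proof -
  have "P_rooted V x i \<pi>
      = (\<Sum>p\<in>parent_maps V i. \<Prod>u\<in>V - {i}. x u (\<pi> u) * x u (conj_map V \<pi> p (\<pi> u)))"
    unfolding P_rooted_def by (intro sum.cong refl prod.cong) (simp add: conj_map_apply[OF \<pi>])
  also have "\<dots> = (\<Sum>\<phi>\<in>parent_maps V (\<pi> i). \<Prod>u\<in>V - {i}. x u (\<pi> u) * x u (\<phi> (\<pi> u)))"
    by (rule sum.reindex_bij_betw[OF bij_betw_conj_map[OF \<pi> \<open>i \<in> V\<close>]])
  also have "\<dots> = (\<Sum>\<phi>\<in>parent_maps V (\<pi> i). \<Prod>u\<in>V - {i}. \<Prod>a\<in>{\<pi> u, \<phi> (\<pi> u)}. x u a)"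
  proof (intro sum.cong refl prod.cong)
    fix \<phi> u
    assume \<phi>: "\<phi> \<in> parent_maps V (\<pi> i)" and "u \<in> V - {i}"
    have "\<pi> u \<in> V - {\<pi> i}"
      using \<pi> \<open>u \<in> V - {i}\<close> by (rule permutes_apply_neq)
    then have "\<phi> (\<pi> u) \<noteq> \<pi> u"
      using parent_map_no_fixpoint[OF \<phi>] by blast
    then show "x u (\<pi> u) * x u (\<phi> (\<pi> u)) = (\<Prod>a\<in>{\<pi> u, \<phi> (\<pi> u)}. x u a)"
      by simp
  qed
  finally show ?thesis .
qed

lemma sum_edge_form_reroot:
  assumes \<phi>: "\<phi> \<in> parent_maps V c" and \<psi>: "\<psi> \<in> parent_maps V c'" and "c \<in> V" and "c' \<in> V"
    and edges: "undirected_edges V c \<phi> = undirected_edges V c' \<psi>"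
  shows "(\<Sum>\<pi> | \<pi> permutes V \<and> \<pi> i = c. \<Prod>u\<in>V - {i}. \<Prod>a\<in>{\<pi> u, \<phi> (\<pi> u)}. x u a)
       = (\<Sum>\<pi> | \<pi> permutes V \<and> \<pi> i = c'. \<Prod>u\<in>V - {i}. \<Prod>a\<in>{\<pi> u, \<psi> (\<pi> u)}. x u a)"
proof -
  obtain \<sigma> where "\<sigma> permutes V" and "\<sigma> c = c'"
    and "\<forall>a\<in>V - {c}. {\<sigma> a, \<psi> (\<sigma> a)} = {a, \<phi> a}"
    using relabelling_permutation[OF bij_betw_undirected_edge[OF \<phi>]
        bij_betw_undirected_edge[OF \<psi>, folded edges] \<open>c \<in> V\<close> \<open>c' \<in> V\<close>] by blast
  then show ?thesis
    by (intro sum_permutes_relabel[where \<sigma>=\<sigma> and e="\<lambda>a. {a, \<phi> a}" and e'="\<lambda>a. {a, \<psi> a}"]) simp_all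
qed

lemma sum_P_rooted_image_independent:
  assumes "i \<in> V" and "c \<in> V" and "c' \<in> V"
  shows "(\<Sum>\<pi> | \<pi> permutes V \<and> \<pi> i = c. P_rooted V x i \<pi>)
       = (\<Sum>\<pi> | \<pi> permutes V \<and> \<pi> i = c'. P_rooted V x i \<pi>)"
proof -
  have expand: "(\<Sum>\<pi> | \<pi> permutes V \<and> \<pi> i = d. P_rooted V x i \<pi>)
      = (\<Sum>\<phi>\<in>parent_maps V d. \<Sum>\<pi> | \<pi> permutes V \<and> \<pi> i = d.
           \<Prod>u\<in>V - {i}. \<Prod>a\<in>{\<pi> u, \<phi> (\<pi> u)}. x u a)" for d
  proof -
    have "(\<Sum>\<pi> | \<pi> permutes V \<and> \<pi> i = d. P_rooted V x i \<pi>)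
        = (\<Sum>\<pi> | \<pi> permutes V \<and> \<pi> i = d. \<Sum>\<phi>\<in>parent_maps V d.
             \<Prod>u\<in>V - {i}. \<Prod>a\<in>{\<pi> u, \<phi> (\<pi> u)}. x u a)"
      using P_rooted_edge_form \<open>i \<in> V\<close> by (intro sum.cong refl) auto
    then show ?thesis
      by (simp add: sum.swap[where B="parent_maps V d"])
  qed
  show ?thesis
    unfolding expand
    by (rule sum_parent_maps_reroot[OF assms(2,3)]) (rule sum_edge_form_reroot[OF _ _ assms(2,3)])
qed

lemma doubly_stochastic_permute_columns:
  assumes x: "doubly_stochastic n x" and \<pi>: "\<pi> permutes {1..n}"
  shows "doubly_stochastic n (\<lambda>u v. x u (\<pi> v))"
  unfolding doubly_stochastic_def
proof (intro conjI ballI)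
  fix u v
  assume "u \<in> {1..n}" and "v \<in> {1..n}"
  moreover have "\<pi> v \<in> {1..n}"
    using permutes_in_image[OF \<pi>] \<open>v \<in> {1..n}\<close> by blast
  ultimately show "x u (\<pi> v) \<ge> 0"
    using x unfolding doubly_stochastic_def by blast
next
  fix u
  assume "u \<in> {1..n}"
  then show "(\<Sum>v\<in>{1..n}. x u (\<pi> v)) = 1"
    using x sum.permute[OF \<pi>, of "x u"] by (simp add: doubly_stochastic_def comp_def)
next
  fix v
  assume "v \<in> {1..n}"
  then have "\<pi> v \<in> {1..n}"
    using permutes_in_image[OF \<pi>] by blast
  then show "(\<Sum>u\<in>{1..n}. x u (\<pi> v)) = 1"
    using x unfolding doubly_stochastic_def by blast
qed

lemma P_poly_eq_P_rooted:
  assumes x: "doubly_stochastic n x" and \<pi>: "\<pi> permutes {1..n}"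
    and "r \<in> {1..n}" and "i \<in> {1..n}"
  shows "P_poly n r \<pi> x = x i (\<pi> i) * P_rooted {1..n} x i \<pi>"
proof -
  let ?Q = "\<lambda>u v. x u (\<pi> v)"
  have "P_poly n r \<pi> x = (\<Prod>u\<in>{1..n}. x u (\<pi> u)) * tree_sum {1..n} ?Q r"
    by (simp only: P_poly_def sum_arborescences_eq_tree_sum[OF \<open>r \<in> {1..n}\<close>])
  also have "tree_sum {1..n} ?Q r = tree_sum {1..n} ?Q i"
    using doubly_stochastic_permute_columns[OF x \<pi>] \<open>r \<in> {1..n}\<close> \<open>i \<in> {1..n}\<close>
    by (intro tree_sum_root_independent) (simp_all add: doubly_stochastic_def)
  also have "(\<Prod>u\<in>{1..n}. x u (\<pi> u)) * tree_sum {1..n} ?Q i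
      = x i (\<pi> i) * ((\<Prod>u\<in>{1..n} - {i}. x u (\<pi> u)) * tree_sum {1..n} ?Q i)"
    using prod.remove[of "{1..n}" i "\<lambda>u. x u (\<pi> u)"] \<open>i \<in> {1..n}\<close> by simp
  also have "(\<Prod>u\<in>{1..n} - {i}. x u (\<pi> u)) * tree_sum {1..n} ?Q i = P_rooted {1..n} x i \<pi>"
    unfolding P_rooted_def tree_sum_def sum_distrib_left by (simp add: prod.distrib)
  finally show ?thesis .
qed

lemma sum_permutations_by_image:
  assumes "finite V" and "i \<in> V"
  shows "(\<Sum>\<pi>\<in>{\<pi>. \<pi> permutes V}. f \<pi>) = (\<Sum>c\<in>V. \<Sum>\<pi> | \<pi> permutes V \<and> \<pi> i = c. f \<pi>)"
proof -
  have "(\<lambda>\<pi>. \<pi> i) ` {\<pi>. \<pi> permutes V} \<subseteq> V"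
    using assms(2) by (auto simp: permutes_in_image)
  then show ?thesis
    using assms(1) by (subst sum.group[symmetric]) (auto simp: finite_permutations intro!: sum.cong)
qed

lemma sum_perm_matrix_mult:
  assumes "finite V"
  shows "(\<Sum>\<pi>\<in>{\<pi>. \<pi> permutes V}. perm_matrix \<pi> i j * f \<pi>) = (\<Sum>\<pi> | \<pi> permutes V \<and> \<pi> i = j. f \<pi>)"
proof -
  have "(\<Sum>\<pi>\<in>{\<pi>. \<pi> permutes V}. perm_matrix \<pi> i j * f \<pi>)
      = (\<Sum>\<pi>\<in>{\<pi>. \<pi> permutes V}. if \<pi> i = j then f \<pi> else 0)"
    by (intro sum.cong) (auto simp: perm_matrix_def)
  also have "\<dots> = (\<Sum>\<pi>\<in>{\<pi> \<in> {\<pi>. \<pi> permutes V}. \<pi> i = j}. f \<pi>)"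
    by (rule sum.inter_filter[symmetric]) (simp add: finite_permutations assms)
  finally show ?thesis
    by simp
qed

lemma sum_P_poly_fixed_image:
  assumes x: "doubly_stochastic n x" and "r \<in> {1..n}" and "i \<in> {1..n}"
    and "c \<in> {1..n}" and "j \<in> {1..n}"
  shows "(\<Sum>\<pi> | \<pi> permutes {1..n} \<and> \<pi> i = c. P_poly n r \<pi> x)
       = x i c * (\<Sum>\<pi> | \<pi> permutes {1..n} \<and> \<pi> i = j. P_rooted {1..n} x i \<pi>)"
proof -
  have "(\<Sum>\<pi> | \<pi> permutes {1..n} \<and> \<pi> i = c. P_poly n r \<pi> x)
      = (\<Sum>\<pi> | \<pi> permutes {1..n} \<and> \<pi> i = c. x i c * P_rooted {1..n} x i \<pi>)"
    using P_poly_eq_P_rooted[OF x _ assms(2,3)] by (intro sum.cong) auto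
  also have "\<dots> = x i c * (\<Sum>\<pi> | \<pi> permutes {1..n} \<and> \<pi> i = c. P_rooted {1..n} x i \<pi>)"
    by (simp add: sum_distrib_left)
  also have "\<dots> = x i c * (\<Sum>\<pi> | \<pi> permutes {1..n} \<and> \<pi> i = j. P_rooted {1..n} x i \<pi>)"
    by (simp only: sum_P_rooted_image_independent[where x=x, OF assms(3-5)])
  finally show ?thesis .
qed

lemma sum_P_poly:
  assumes x: "doubly_stochastic n x" and "r \<in> {1..n}" and "i \<in> {1..n}" and "j \<in> {1..n}"
  shows "(\<Sum>\<pi>\<in>{\<pi>. \<pi> permutes {1..n}}. P_poly n r \<pi> x)
       = (\<Sum>\<pi> | \<pi> permutes {1..n} \<and> \<pi> i = j. P_rooted {1..n} x i \<pi>)"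
proof -
  have "(\<Sum>\<pi>\<in>{\<pi>. \<pi> permutes {1..n}}. P_poly n r \<pi> x)
      = (\<Sum>c\<in>{1..n}. \<Sum>\<pi> | \<pi> permutes {1..n} \<and> \<pi> i = c. P_poly n r \<pi> x)"
    by (rule sum_permutations_by_image[OF finite_atLeastAtMost \<open>i \<in> {1..n}\<close>])
  also have "\<dots> = (\<Sum>c\<in>{1..n}. x i c) * (\<Sum>\<pi> | \<pi> permutes {1..n} \<and> \<pi> i = j. P_rooted {1..n} x i \<pi>)"
    using sum_P_poly_fixed_image[OF assms(1-3) _ assms(4)] by (simp add: sum_distrib_right)
  also have "(\<Sum>c\<in>{1..n}. x i c) = 1"
    using x \<open>i \<in> {1..n}\<close> by (simp add: doubly_stochastic_def)
  finally show ?thesis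
    by simp
qed

theorem proposition3p5:
  fixes n r :: nat and x :: "nat \<Rightarrow> nat \<Rightarrow> real"
  assumes "n \<ge> 1" and "r \<in> {1..n}" and "doubly_stochastic n x"
  shows "\<forall>i\<in>{1..n}. \<forall>j\<in>{1..n}.
           (\<Sum>\<pi>\<in>{\<pi>. \<pi> permutes {1..n}}. (perm_matrix \<pi> i j - x i j) * P_poly n r \<pi> x) = 0"
proof (intro ballI)
  fix i j
  assume i: "i \<in> {1..n}" and j: "j \<in> {1..n}"
  have "(\<Sum>\<pi>\<in>{\<pi>. \<pi> permutes {1..n}}. (perm_matrix \<pi> i j - x i j) * P_poly n r \<pi> x)
      = (\<Sum>\<pi>\<in>{\<pi>. \<pi> permutes {1..n}}. perm_matrix \<pi> i j * P_poly n r \<pi> x)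
        - x i j * (\<Sum>\<pi>\<in>{\<pi>. \<pi> permutes {1..n}}. P_poly n r \<pi> x)"
    by (simp add: left_diff_distrib sum_subtractf sum_distrib_left)
  also have "\<dots> = (\<Sum>\<pi> | \<pi> permutes {1..n} \<and> \<pi> i = j. P_poly n r \<pi> x)
        - x i j * (\<Sum>\<pi> | \<pi> permutes {1..n} \<and> \<pi> i = j. P_rooted {1..n} x i \<pi>)"
    using sum_perm_matrix_mult[OF finite_atLeastAtMost] sum_P_poly[OF assms(3,2) i j] by simp
  also have "\<dots> = 0"
    using sum_P_poly_fixed_image[OF assms(3,2) i j j] by simp
  finally show "(\<Sum>\<pi>\<in>{\<pi>. \<pi> permutes {1..n}}. (perm_matrix \<pi> i j - x i j) * P_poly n r \<pi> x) = 0" .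
qed

end
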